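(* Let $G$ be a finite metacyclic group. Then every family $\mathcal{F}$ of subgroups of $G$ that is generating, closed under conjugation, regular and independent has active sum isomorphic to $G$, i.e. the canonical homomorphism $\varphi:S\to G$ from the active sum $S$ of $\mathcal{F}$ is an isomorphism.
   Context: A group is metacyclic if it has a normal cyclic subgroup with cyclic quotient. Families are discrete families of distinct subgroups. For a group $G$ and a family $\mathcal{F}$ of distinct subgroups that generates $G$ and is closed under conjugation ($g^{-1}Fg\in\mathcal{F}$ for all $F\in\mathcal{F}$, $g\in G$), the active sum $S$ of $\mathcal{F}$ is the free product of the members of $\mathcal{F}$ divided by the normal subgroup generated by all elements $h^{-1}\cdot g\cdot h\cdot (g^h)^{-1}$ with $h\in F_1$, $g\in F_2$, $F_1,F_2\in\mathcal{F}$, where $g^h=h^{-1}gh$ is regarded as an element of the factor $F_2^h=h^{-1}F_2h\in\mathcal{F}$. The inclusions induce a canonical surjective homomorphism $\varphi:S\to G$. Such a family is regular iff $[F,N_G(F)]=F\cap G'$ for every $F\in\mathcal{F}$, where $N_G(F)$ is the normalizer and $G'$ the commutator subgroup. Choosing a set $\mathcal{T}$ of representatives of the conjugacy classes of members of $\mathcal{F}$, the family is independent iff the canonical homomorphism $\bigoplus_{F\in\mathcal{T}}F/(F\cap G')\to G/G'$ is an isomorphism. *)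

theory Defs
  imports "HOL-Algebra.Algebra"
begin

text \<open>Signed letters: (x, True) stands for the generator x, (x, False) for its inverse.\<close>

inductive_set pres_cong :: "'g set \<Rightarrow> ('g \<times> bool) list set \<Rightarrow> (('g \<times> bool) list \<times> ('g \<times> bool) list) set"
  for Xg Rr where
  refl: "set (map fst w) \<subseteq> Xg \<Longrightarrow> (w, w) \<in> pres_cong Xg Rr"
| sym: "(v, w) \<in> pres_cong Xg Rr \<Longrightarrow> (w, v) \<in> pres_cong Xg Rr"
| trans: "(u, v) \<in> pres_cong Xg Rr \<Longrightarrow> (v, w) \<in> pres_cong Xg Rr \<Longrightarrow> (u, w) \<in> pres_cong Xg Rr"
| cancel: "set (map fst (u @ v)) \<subseteq> Xg \<Longrightarrow> x \<in> Xg \<Longrightarrow>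
             (u @ [(x, b), (x, \<not> b)] @ v, u @ v) \<in> pres_cong Xg Rr"
| rel: "r \<in> Rr \<Longrightarrow> set (map fst (u @ r @ v)) \<subseteq> Xg \<Longrightarrow> (u @ r @ v, u @ v) \<in> pres_cong Xg Rr"

definition presented_group :: "'g set \<Rightarrow> ('g \<times> bool) list set \<Rightarrow> ('g \<times> bool) list set monoid" where
  "presented_group Xg Rr =
     \<lparr> carrier = Equiv_Relations.quotient {w. set (map fst w) \<subseteq> Xg} (pres_cong Xg Rr),
       monoid.mult = (\<lambda>A B. pres_cong Xg Rr `` {(SOME a. a \<in> A) @ (SOME b. b \<in> B)}),
       one = pres_cong Xg Rr `` {[]} \<rparr>"

definition conj_set :: "('a, 'b) monoid_scheme \<Rightarrow> 'a set \<Rightarrow> 'a \<Rightarrow> 'a set" where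
  "conj_set G F h = (\<lambda>g. inv\<^bsub>G\<^esub> h \<otimes>\<^bsub>G\<^esub> g \<otimes>\<^bsub>G\<^esub> h) ` F"

definition as_gens :: "('a, 'b) monoid_scheme \<Rightarrow> 'a set set \<Rightarrow> ('a set \<times> 'a) set" where
  "as_gens G \<F> = {(F, x). F \<in> \<F> \<and> x \<in> F}"

text \<open>Relators: the multiplication tables of the factors (giving the free product) and the
  relations h^{-1} g h = g^h, with g^h regarded as an element of the factor F2^h.\<close>
definition as_rels :: "('a, 'b) monoid_scheme \<Rightarrow> 'a set set \<Rightarrow> (('a set \<times> 'a) \<times> bool) list set" where
  "as_rels G \<F> =
     {[((F, x), True), ((F, y), True), ((F, x \<otimes>\<^bsub>G\<^esub> y), False)] | F x y. F \<in> \<F> \<and> x \<in> F \<and> y \<in> F}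
   \<union> {[((F1, h), False), ((F2, g), True), ((F1, h), True),
        ((conj_set G F2 h, inv\<^bsub>G\<^esub> h \<otimes>\<^bsub>G\<^esub> g \<otimes>\<^bsub>G\<^esub> h), False)]
       | F1 F2 h g. F1 \<in> \<F> \<and> F2 \<in> \<F> \<and> h \<in> F1 \<and> g \<in> F2}"

definition active_sum :: "('a, 'b) monoid_scheme \<Rightarrow> 'a set set \<Rightarrow> (('a set \<times> 'a) \<times> bool) list set monoid" where
  "active_sum G \<F> = presented_group (as_gens G \<F>) (as_rels G \<F>)"

definition eval_word :: "('a, 'b) monoid_scheme \<Rightarrow> (('a set \<times> 'a) \<times> bool) list \<Rightarrow> 'a" where
  "eval_word G w = foldr (\<lambda>((F, x), b) acc. (if b then x else inv\<^bsub>G\<^esub> x) \<otimes>\<^bsub>G\<^esub> acc) w \<one>\<^bsub>G\<^esub>"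

definition active_sum_hom :: "('a, 'b) monoid_scheme \<Rightarrow> 'a set set \<Rightarrow> (('a set \<times> 'a) \<times> bool) list set \<Rightarrow> 'a" where
  "active_sum_hom G \<F> A = eval_word G (SOME w. w \<in> A)"

definition metacyclic :: "('a, 'b) monoid_scheme \<Rightarrow> bool" where
  "metacyclic G \<longleftrightarrow> (\<exists>N. N \<lhd> G \<and> cyclic_group (G\<lparr>carrier := N\<rparr>) \<and> cyclic_group (G Mod N))"

definition commutator_subgroup :: "('a, 'b) monoid_scheme \<Rightarrow> 'a set \<Rightarrow> 'a set \<Rightarrow> 'a set" where
  "commutator_subgroup G A B =
     generate G {a \<otimes>\<^bsub>G\<^esub> b \<otimes>\<^bsub>G\<^esub> inv\<^bsub>G\<^esub> a \<otimes>\<^bsub>G\<^esub> inv\<^bsub>G\<^esub> b | a b. a \<in> A \<and> b \<in> B}"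

definition family :: "('a, 'b) monoid_scheme \<Rightarrow> 'a set set \<Rightarrow> bool" where
  "family G \<F> \<longleftrightarrow> (\<forall>F\<in>\<F>. subgroup F G)"

definition generating :: "('a, 'b) monoid_scheme \<Rightarrow> 'a set set \<Rightarrow> bool" where
  "generating G \<F> \<longleftrightarrow> generate G (\<Union>\<F>) = carrier G"

definition conj_closed :: "('a, 'b) monoid_scheme \<Rightarrow> 'a set set \<Rightarrow> bool" where
  "conj_closed G \<F> \<longleftrightarrow> (\<forall>F\<in>\<F>. \<forall>g\<in>carrier G. conj_set G F g \<in> \<F>)"

definition regular_family :: "('a, 'b) monoid_scheme \<Rightarrow> 'a set set \<Rightarrow> bool" where
  "regular_family G \<F> \<longleftrightarrow>
     (\<forall>F\<in>\<F>. commutator_subgroup G F (normalizer G F) = F \<inter> derived G (carrier G))"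

definition conj_reps :: "('a, 'b) monoid_scheme \<Rightarrow> 'a set set \<Rightarrow> 'a set set \<Rightarrow> bool" where
  "conj_reps G \<F> T \<longleftrightarrow> T \<subseteq> \<F> \<and> (\<forall>F\<in>\<F>. \<exists>!F'\<in>T. \<exists>g\<in>carrier G. F = conj_set G F' g)"

text \<open>The canonical map  (+)_{F in T} F/(F \<inter> G') -> G/G': a family of cosets c F of F \<inter> G' in F
  is sent to the product of the cosets (c F) G' in G/G'.\<close>
definition indep_map :: "('a, 'b) monoid_scheme \<Rightarrow> 'a set set \<Rightarrow> ('a set \<Rightarrow> 'a set) \<Rightarrow> 'a set" where
  "indep_map G T c =
     finprod (G Mod derived G (carrier G)) (\<lambda>F. c F <#>\<^bsub>G\<^esub> derived G (carrier G)) T"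

definition independent_family :: "('a, 'b) monoid_scheme \<Rightarrow> 'a set set \<Rightarrow> bool" where
  "independent_family G \<F> \<longleftrightarrow>
     (\<exists>T. conj_reps G \<F> T \<and>
        indep_map G T \<in> iso
          (product_group T (\<lambda>F. (G\<lparr>carrier := F\<rparr>) Mod (F \<inter> derived G (carrier G))))
          (G Mod derived G (carrier G)))"

end

theory Submission
  imports Defs
begin

text \<open>The canonical map \<open>\<phi> : S \<rightarrow> G\<close> is onto because the family generates \<open>G\<close>.
  The defining relations of \<open>S\<close> say that conjugation by \<open>s \<in> S\<close> moves the generators
  \<open>\<iota>\<^sub>F(f)\<close> exactly as conjugation by \<open>\<phi>(s)\<close> moves \<open>f\<close> in \<open>G\<close>, so \<open>s\<close> is central as soon as
  \<open>\<phi>(s)\<close> is; in particular \<open>ker \<phi>\<close> is central. Regularity and independence make the induced map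
  \<open>S/S' \<rightarrow> G/G'\<close> injective, so \<open>ker \<phi> \<subseteq> S'\<close>. Finally, a central extension of a metacyclic group
  whose kernel lies in the derived subgroup is trivial.\<close>

section \<open>Presented groups\<close>

definition words_on :: "'g set \<Rightarrow> ('g \<times> bool) list set" where
  "words_on Xg = {w. set (map fst w) \<subseteq> Xg}"

definition inv_word :: "('g \<times> bool) list \<Rightarrow> ('g \<times> bool) list" where
  "inv_word w = rev (map (\<lambda>(x, b). (x, \<not> b)) w)"

lemma words_on_simps [simp]:
  "[] \<in> words_on Xg"
  "l # w \<in> words_on Xg \<longleftrightarrow> fst l \<in> Xg \<and> w \<in> words_on Xg"
  "u @ v \<in> words_on Xg \<longleftrightarrow> u \<in> words_on Xg \<and> v \<in> words_on Xg"
  by (auto simp: words_on_def)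

lemma inv_word_simps [simp]:
  "inv_word [] = []"
  "inv_word (l # w) = inv_word w @ [(fst l, \<not> snd l)]"
  by (auto simp: inv_word_def split: prod.splits)

lemma inv_word_in_words_on [simp]: "inv_word w \<in> words_on Xg \<longleftrightarrow> w \<in> words_on Xg"
  by (induct w) auto

lemma pres_cong_in_words_on: "(u, v) \<in> pres_cong Xg Rr \<Longrightarrow> u \<in> words_on Xg \<and> v \<in> words_on Xg"
  by (induct rule: pres_cong.induct) (auto simp: words_on_def)

lemma pres_cong_reflI: "w \<in> words_on Xg \<Longrightarrow> (w, w) \<in> pres_cong Xg Rr"
  by (rule pres_cong.refl) (simp add: words_on_def)

lemma equiv_pres_cong: "equiv (words_on Xg) (pres_cong Xg Rr)"
  unfolding equiv_def refl_on_def sym_def trans_def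
  using pres_cong_in_words_on pres_cong_reflI pres_cong.sym pres_cong.trans by fast

lemma pres_cong_append_right:
  "(u, v) \<in> pres_cong Xg Rr \<Longrightarrow> w \<in> words_on Xg \<Longrightarrow> (u @ w, v @ w) \<in> pres_cong Xg Rr"
proof (induct rule: pres_cong.induct)
  case (refl w')
  then show ?case by (intro pres_cong.refl) (auto simp: words_on_def)
next
  case (cancel u v x b)
  then show ?case using pres_cong.cancel[of u "v @ w" Xg x b Rr] by (auto simp: words_on_def)
next
  case (rel r u v)
  then show ?case using pres_cong.rel[of r Rr u "v @ w" Xg] by (auto simp: words_on_def)
qed (blast intro: pres_cong.sym pres_cong.trans)+

lemma pres_cong_append_left:
  "(u, v) \<in> pres_cong Xg Rr \<Longrightarrow> w \<in> words_on Xg \<Longrightarrow> (w @ u, w @ v) \<in> pres_cong Xg Rr"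
proof (induct rule: pres_cong.induct)
  case (refl w')
  then show ?case by (intro pres_cong.refl) (auto simp: words_on_def)
next
  case (cancel u v x b)
  then show ?case using pres_cong.cancel[of "w @ u" v Xg x b Rr] by (auto simp: words_on_def)
next
  case (rel r u v)
  then show ?case using pres_cong.rel[of r Rr "w @ u" v Xg] by (auto simp: words_on_def)
qed (blast intro: pres_cong.sym pres_cong.trans)+

lemma pres_cong_append:
  "(u, u') \<in> pres_cong Xg Rr \<Longrightarrow> (v, v') \<in> pres_cong Xg Rr \<Longrightarrow> (u @ v, u' @ v') \<in> pres_cong Xg Rr"
  by (meson pres_cong_append_left pres_cong_append_right pres_cong_in_words_on pres_cong.trans)

lemma pres_cong_cancel_letter: "x \<in> Xg \<Longrightarrow> ([(x, b), (x, \<not> b)], []) \<in> pres_cong Xg Rr"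
  using pres_cong.cancel[of "[]" "[]" Xg x b Rr] by simp

lemma pres_cong_inv_word_left: "w \<in> words_on Xg \<Longrightarrow> (inv_word w @ w, []) \<in> pres_cong Xg Rr"
proof (induct w)
  case Nil
  then show ?case by (simp add: pres_cong_reflI)
next
  case (Cons l w)
  obtain x b where l: "l = (x, b)" by force
  have x: "x \<in> Xg" and w: "w \<in> words_on Xg" using Cons l by auto
  have "(inv_word w @ [(x, \<not> b), (x, b)] @ w, inv_word w @ [] @ w) \<in> pres_cong Xg Rr"
    using pres_cong_cancel_letter[OF x, of "\<not> b"] w by (intro pres_cong_append pres_cong_reflI) auto
  then show ?case using Cons w by (auto simp: l intro: pres_cong.trans)
qed

abbreviation word_class :: "'g set \<Rightarrow> ('g \<times> bool) list set \<Rightarrow> ('g \<times> bool) list \<Rightarrow> ('g \<times> bool) list set"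
  where "word_class Xg Rr w \<equiv> pres_cong Xg Rr `` {w}"

lemma word_class_eq: "(u, v) \<in> pres_cong Xg Rr \<Longrightarrow> word_class Xg Rr u = word_class Xg Rr v"
  using equiv_pres_cong by (metis equiv_class_eq)

lemma carrier_presented_group:
  "carrier (presented_group Xg Rr) = {word_class Xg Rr w | w. w \<in> words_on Xg}"
  by (auto simp: presented_group_def quotient_def words_on_def)

lemma one_presented_group: "\<one>\<^bsub>presented_group Xg Rr\<^esub> = word_class Xg Rr []"
  by (simp add: presented_group_def)

lemma mult_presented_group:
  assumes "u \<in> words_on Xg" and "v \<in> words_on Xg"
  shows "word_class Xg Rr u \<otimes>\<^bsub>presented_group Xg Rr\<^esub> word_class Xg Rr v = word_class Xg Rr (u @ v)"
proof -
  have "u \<in> word_class Xg Rr u" "v \<in> word_class Xg Rr v"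
    using assms pres_cong_reflI by fastforce+
  then have "(SOME a. a \<in> word_class Xg Rr u) \<in> word_class Xg Rr u"
    and "(SOME a. a \<in> word_class Xg Rr v) \<in> word_class Xg Rr v"
    by (meson someI)+
  then show ?thesis
    unfolding presented_group_def by (simp add: word_class_eq[symmetric] pres_cong_append)
qed

lemma group_presented_group: "group (presented_group Xg Rr)"
proof (rule groupI)
  fix x
  assume "x \<in> carrier (presented_group Xg Rr)"
  then obtain w where w: "w \<in> words_on Xg" "x = word_class Xg Rr w"
    by (auto simp: carrier_presented_group)
  show "\<exists>y\<in>carrier (presented_group Xg Rr). y \<otimes>\<^bsub>presented_group Xg Rr\<^esub> x = \<one>\<^bsub>presented_group Xg Rr\<^esub>"
    using w pres_cong_inv_word_left[OF w(1)]
    by (intro bexI[of _ "word_class Xg Rr (inv_word w)"])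
       (auto simp: carrier_presented_group mult_presented_group one_presented_group word_class_eq)
qed (auto simp: carrier_presented_group mult_presented_group one_presented_group)

lemma word_class_closed: "w \<in> words_on Xg \<Longrightarrow> word_class Xg Rr w \<in> carrier (presented_group Xg Rr)"
  by (auto simp: carrier_presented_group)

lemma word_class_letter_inv:
  assumes "x \<in> Xg"
  shows "word_class Xg Rr [(x, \<not> b)] = inv\<^bsub>presented_group Xg Rr\<^esub> (word_class Xg Rr [(x, b)])"
proof -
  interpret group "presented_group Xg Rr" by (rule group_presented_group)
  have "word_class Xg Rr [(x, b)] \<otimes>\<^bsub>presented_group Xg Rr\<^esub> word_class Xg Rr [(x, \<not> b)]
      = \<one>\<^bsub>presented_group Xg Rr\<^esub>"
    using assms pres_cong_cancel_letter[OF assms]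
    by (simp add: mult_presented_group one_presented_group word_class_eq)
  then show ?thesis
    using assms by (metis word_class_closed words_on_simps(1,2) fst_conv inv_equality inv_inv)
qed

lemma word_class_relator:
  "r \<in> Rr \<Longrightarrow> r \<in> words_on Xg \<Longrightarrow> word_class Xg Rr r = \<one>\<^bsub>presented_group Xg Rr\<^esub>"
  using pres_cong.rel[of r Rr "[]" "[]" Xg] by (simp add: one_presented_group word_class_eq words_on_def)

section \<open>The active sum and its canonical map\<close>

lemma (in group) cancel_simps:
  "x \<in> carrier G \<Longrightarrow> y \<in> carrier G \<Longrightarrow> x \<otimes> (inv x \<otimes> y) = y"
  "x \<in> carrier G \<Longrightarrow> y \<in> carrier G \<Longrightarrow> inv x \<otimes> (x \<otimes> y) = y"
  by (simp_all add: m_assoc[symmetric])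

definition center :: "('a, 'b) monoid_scheme \<Rightarrow> 'a set" where
  "center G = {z \<in> carrier G. \<forall>x\<in>carrier G. z \<otimes>\<^bsub>G\<^esub> x = x \<otimes>\<^bsub>G\<^esub> z}"

locale conj_closed_family =
  fixes G :: "('a, 'b) monoid_scheme" and Fam :: "'a set set"
  assumes group: "group G" and family: "family G Fam" and conj_closed: "conj_closed G Fam"
begin

abbreviation "S \<equiv> active_sum G Fam"
abbreviation "\<phi> \<equiv> active_sum_hom G Fam"
abbreviation "cl \<equiv> word_class (as_gens G Fam) (as_rels G Fam)"

definition incl :: "'a set \<Rightarrow> 'a \<Rightarrow> (('a set \<times> 'a) \<times> bool) list set" where
  "incl F f = cl [((F, f), True)]"

sublocale G: group G by (rule group)
sublocale S: group S unfolding active_sum_def by (rule group_presented_group)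

lemma subgroup_member: "F \<in> Fam \<Longrightarrow> subgroup F G"
  using family by (auto simp: family_def)

lemma member_closed: "F \<in> Fam \<Longrightarrow> x \<in> F \<Longrightarrow> x \<in> carrier G"
  using subgroup_member subgroup.subset by blast

lemma as_gens_iff [simp]: "(F, x) \<in> as_gens G Fam \<longleftrightarrow> F \<in> Fam \<and> x \<in> F"
  by (simp add: as_gens_def)

lemma conj_set_member: "F \<in> Fam \<Longrightarrow> g \<in> carrier G \<Longrightarrow> conj_set G F g \<in> Fam"
  using conj_closed by (auto simp: conj_closed_def)

lemma conj_set_memI: "f \<in> F \<Longrightarrow> inv\<^bsub>G\<^esub> g \<otimes>\<^bsub>G\<^esub> f \<otimes>\<^bsub>G\<^esub> g \<in> conj_set G F g"
  by (auto simp: conj_set_def)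

lemma conj_set_one: "F \<subseteq> carrier G \<Longrightarrow> conj_set G F \<one>\<^bsub>G\<^esub> = F"
  unfolding conj_set_def by (auto simp: subsetD)

lemma conj_set_conj_set:
  "F \<subseteq> carrier G \<Longrightarrow> a \<in> carrier G \<Longrightarrow> b \<in> carrier G \<Longrightarrow>
    conj_set G (conj_set G F a) b = conj_set G F (a \<otimes>\<^bsub>G\<^esub> b)"
  unfolding conj_set_def image_image
  by (intro image_cong refl) (auto simp: G.inv_mult_group G.m_assoc subsetD)

lemma as_rels_words_on: "r \<in> as_rels G Fam \<Longrightarrow> r \<in> words_on (as_gens G Fam)"
  unfolding as_rels_def
  by (auto simp: conj_set_member member_closed conj_set_memI intro: subgroup.m_closed[OF subgroup_member])

lemma eval_word_Nil [simp]: "eval_word G [] = \<one>\<^bsub>G\<^esub>"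
  by (simp add: eval_word_def)

lemma eval_word_Cons [simp]:
  "eval_word G (((F, x), b) # w) = (if b then x else inv\<^bsub>G\<^esub> x) \<otimes>\<^bsub>G\<^esub> eval_word G w"
  by (simp add: eval_word_def)

lemma eval_word_closed: "w \<in> words_on (as_gens G Fam) \<Longrightarrow> eval_word G w \<in> carrier G"
  by (induct w) (auto simp: member_closed)

lemma eval_word_append:
  "u \<in> words_on (as_gens G Fam) \<Longrightarrow> v \<in> words_on (as_gens G Fam) \<Longrightarrow>
    eval_word G (u @ v) = eval_word G u \<otimes>\<^bsub>G\<^esub> eval_word G v"
  by (induct u) (auto simp: member_closed eval_word_closed G.m_assoc)

lemma eval_word_relator: "r \<in> as_rels G Fam \<Longrightarrow> eval_word G r = \<one>\<^bsub>G\<^esub>"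
  unfolding as_rels_def
  by (auto simp: member_closed G.m_assoc G.inv_mult_group G.cancel_simps
      intro: subgroup.m_closed[OF subgroup_member])

lemma eval_word_pres_cong: "(u, v) \<in> pres_cong (as_gens G Fam) (as_rels G Fam) \<Longrightarrow> eval_word G u = eval_word G v"
proof (induct rule: pres_cong.induct)
  case (cancel u v x b)
  obtain F y where x: "x = (F, y)" by force
  then have "y \<in> carrier G" using cancel member_closed by auto
  with cancel x show ?case
    by (auto simp: eval_word_append words_on_def eval_word_closed G.m_assoc G.cancel_simps)
next
  case (rel r u v)
  then have "u \<in> words_on (as_gens G Fam)" "r \<in> words_on (as_gens G Fam)" "v \<in> words_on (as_gens G Fam)"
    by (auto simp: words_on_def)
  with rel show ?case
    by (simp add: eval_word_append eval_word_relator eval_word_closed)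
qed auto

lemma active_sum_hom_class: "w \<in> words_on (as_gens G Fam) \<Longrightarrow> \<phi> (cl w) = eval_word G w"
proof -
  assume w: "w \<in> words_on (as_gens G Fam)"
  then have "(SOME v. v \<in> cl w) \<in> cl w" by (meson pres_cong_reflI Image_singleton_iff someI)
  then show ?thesis
    unfolding active_sum_hom_def using eval_word_pres_cong by (metis Image_singleton_iff)
qed

lemma carrier_active_sum: "carrier S = {cl w | w. w \<in> words_on (as_gens G Fam)}"
  by (simp add: active_sum_def carrier_presented_group)

lemma mult_active_sum:
  "u \<in> words_on (as_gens G Fam) \<Longrightarrow> v \<in> words_on (as_gens G Fam) \<Longrightarrow> cl u \<otimes>\<^bsub>S\<^esub> cl v = cl (u @ v)"
  by (simp add: active_sum_def mult_presented_group)

lemma active_sum_hom_hom: "\<phi> \<in> hom S G"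
  by (rule homI) (auto simp: carrier_active_sum active_sum_hom_class eval_word_closed mult_active_sum eval_word_append)

sublocale \<phi>: group_hom S G \<phi>
  by (simp add: group_hom.intro group_hom_axioms.intro active_sum_hom_hom S.group_axioms G.group_axioms)

lemma incl_closed: "F \<in> Fam \<Longrightarrow> f \<in> F \<Longrightarrow> incl F f \<in> carrier S"
  by (auto simp: incl_def carrier_active_sum)

lemma active_sum_hom_incl: "F \<in> Fam \<Longrightarrow> f \<in> F \<Longrightarrow> \<phi> (incl F f) = f"
  by (auto simp: incl_def active_sum_hom_class member_closed)

lemma class_relator: "r \<in> as_rels G Fam \<Longrightarrow> cl r = \<one>\<^bsub>S\<^esub>"
  by (simp add: active_sum_def word_class_relator as_rels_words_on)

lemma class_letter: "F \<in> Fam \<Longrightarrow> x \<in> F \<Longrightarrow> cl [((F, x), b)] = (if b then incl F x else inv\<^bsub>S\<^esub> (incl F x))"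
  using word_class_letter_inv[of "(F, x)" "as_gens G Fam" "as_rels G Fam" True]
  by (simp add: incl_def active_sum_def)

lemma class_Cons:
  "fst l \<in> as_gens G Fam \<Longrightarrow> m # w \<in> words_on (as_gens G Fam) \<Longrightarrow>
    cl (l # m # w) = cl [l] \<otimes>\<^bsub>S\<^esub> cl (m # w)"
  using mult_active_sum[of "[l]" "m # w"] by simp

lemma incl_mult:
  assumes F: "F \<in> Fam" and x: "x \<in> F" and y: "y \<in> F"
  shows "incl F (x \<otimes>\<^bsub>G\<^esub> y) = incl F x \<otimes>\<^bsub>S\<^esub> incl F y"
proof -
  have xy: "x \<otimes>\<^bsub>G\<^esub> y \<in> F" using subgroup.m_closed[OF subgroup_member[OF F] x y] .
  let ?r = "[((F, x), True), ((F, y), True), ((F, x \<otimes>\<^bsub>G\<^esub> y), False)]"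
  have "?r \<in> as_rels G Fam" using F x y unfolding as_rels_def by blast
  then have "incl F x \<otimes>\<^bsub>S\<^esub> (incl F y \<otimes>\<^bsub>S\<^esub> inv\<^bsub>S\<^esub> incl F (x \<otimes>\<^bsub>G\<^esub> y)) = \<one>\<^bsub>S\<^esub>"
    using F x y xy by (simp add: class_relator[symmetric] class_Cons class_letter)
  then show ?thesis
    using F x y xy incl_closed by (simp add: S.m_assoc[symmetric] S.inv_solve_right')
qed

lemma incl_one: "F \<in> Fam \<Longrightarrow> incl F \<one>\<^bsub>G\<^esub> = \<one>\<^bsub>S\<^esub>"
  using incl_mult[of F "\<one>\<^bsub>G\<^esub>" "\<one>\<^bsub>G\<^esub>"] incl_closed subgroup.one_closed[OF subgroup_member]
  by (metis G.one_closed G.r_one S.l_cancel_one')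

lemma incl_inv: "F \<in> Fam \<Longrightarrow> x \<in> F \<Longrightarrow> incl F (inv\<^bsub>G\<^esub> x) = inv\<^bsub>S\<^esub> (incl F x)"
  using incl_mult[of F "inv\<^bsub>G\<^esub> x" x] incl_one incl_closed member_closed
    subgroup.m_inv_closed[OF subgroup_member]
  by (simp add: S.inv_equality)

lemma active_sum_induct [consumes 1, case_names one step]:
  assumes "s \<in> carrier S"
    and "P \<one>\<^bsub>S\<^esub>"
    and step: "\<And>F f s. F \<in> Fam \<Longrightarrow> f \<in> F \<Longrightarrow> s \<in> carrier S \<Longrightarrow> P s \<Longrightarrow> P (incl F f \<otimes>\<^bsub>S\<^esub> s)"
  shows "P s"
proof -
  obtain w where w: "w \<in> words_on (as_gens G Fam)" "s = cl w"
    using assms(1) by (auto simp: carrier_active_sum)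
  have "P (cl w)" using w(1)
  proof (induct w)
    case Nil
    then show ?case using assms(2) by (simp add: active_sum_def one_presented_group)
  next
    case (Cons l w)
    obtain F x b where l: "l = ((F, x), b)" by (metis prod.collapse)
    have F: "F \<in> Fam" "x \<in> F" and w: "w \<in> words_on (as_gens G Fam)" using Cons l by auto
    have "cl [l] = incl F (if b then x else inv\<^bsub>G\<^esub> x)"
      using F by (simp add: l class_letter incl_inv)
    then have "cl (l # w) = incl F (if b then x else inv\<^bsub>G\<^esub> x) \<otimes>\<^bsub>S\<^esub> cl w"
      using mult_active_sum[of "[l]" w] F w by (simp add: l)
    then show ?case
      using step[OF F(1) _ _ Cons(1)[OF w]] F w subgroup.m_inv_closed[OF subgroup_member]
      by (auto simp: carrier_active_sum)
  qed
  then show ?thesis using w by simp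
qed

lemma incl_conj:
  assumes F1: "F1 \<in> Fam" and F2: "F2 \<in> Fam" and h: "h \<in> F1" and g: "g \<in> F2"
  shows "inv\<^bsub>S\<^esub> (incl F1 h) \<otimes>\<^bsub>S\<^esub> incl F2 g \<otimes>\<^bsub>S\<^esub> incl F1 h
       = incl (conj_set G F2 h) (inv\<^bsub>G\<^esub> h \<otimes>\<^bsub>G\<^esub> g \<otimes>\<^bsub>G\<^esub> h)"
proof -
  let ?F = "conj_set G F2 h" and ?k = "inv\<^bsub>G\<^esub> h \<otimes>\<^bsub>G\<^esub> g \<otimes>\<^bsub>G\<^esub> h"
  have F: "?F \<in> Fam" using conj_set_member F2 member_closed[OF F1 h] by blast
  have k: "?k \<in> ?F" using conj_set_memI g by blast
  let ?r = "[((F1, h), False), ((F2, g), True), ((F1, h), True), ((?F, ?k), False)]"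
  have "?r \<in> as_rels G Fam" using F1 F2 h g unfolding as_rels_def by blast
  then have "inv\<^bsub>S\<^esub> (incl F1 h) \<otimes>\<^bsub>S\<^esub> (incl F2 g \<otimes>\<^bsub>S\<^esub> (incl F1 h \<otimes>\<^bsub>S\<^esub> inv\<^bsub>S\<^esub> (incl ?F ?k)))
      = \<one>\<^bsub>S\<^esub>"
    using F1 F2 h g F k by (simp add: class_relator[symmetric] class_Cons class_letter)
  then have "(inv\<^bsub>S\<^esub> (incl F1 h) \<otimes>\<^bsub>S\<^esub> incl F2 g \<otimes>\<^bsub>S\<^esub> incl F1 h) \<otimes>\<^bsub>S\<^esub> inv\<^bsub>S\<^esub> (incl ?F ?k)
      = \<one>\<^bsub>S\<^esub>"
    using F1 F2 F h g k incl_closed by (simp add: S.m_assoc)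
  then show ?thesis
    using F1 F2 F h g k incl_closed by (simp add: S.inv_solve_right')
qed

lemma incl_conj_active_sum:
  assumes "s \<in> carrier S" and "F \<in> Fam" and "f \<in> F"
  shows "inv\<^bsub>S\<^esub> s \<otimes>\<^bsub>S\<^esub> incl F f \<otimes>\<^bsub>S\<^esub> s
     = incl (conj_set G F (\<phi> s)) (inv\<^bsub>G\<^esub> (\<phi> s) \<otimes>\<^bsub>G\<^esub> f \<otimes>\<^bsub>G\<^esub> \<phi> s)"
  using assms
proof (induct arbitrary: F f rule: active_sum_induct)
  case one
  then show ?case
    using incl_closed conj_set_one[OF subgroup.subset[OF subgroup_member]] member_closed by simp
next
  case (step F1 h s F f)
  have hG: "h \<in> carrier G" and fG: "f \<in> carrier G" using member_closed step by blast+
  have c: "incl F1 h \<in> carrier S" "incl F f \<in> carrier S" using incl_closed step by blast+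
  let ?F = "conj_set G F h" and ?k = "inv\<^bsub>G\<^esub> h \<otimes>\<^bsub>G\<^esub> f \<otimes>\<^bsub>G\<^esub> h"
  have F: "?F \<in> Fam" and k: "?k \<in> ?F" using conj_set_member conj_set_memI step hG by blast+
  have ps: "\<phi> s \<in> carrier G" using step by simp
  have "inv\<^bsub>S\<^esub> (incl F1 h \<otimes>\<^bsub>S\<^esub> s) \<otimes>\<^bsub>S\<^esub> incl F f \<otimes>\<^bsub>S\<^esub> (incl F1 h \<otimes>\<^bsub>S\<^esub> s)
      = inv\<^bsub>S\<^esub> s \<otimes>\<^bsub>S\<^esub> (inv\<^bsub>S\<^esub> (incl F1 h) \<otimes>\<^bsub>S\<^esub> incl F f \<otimes>\<^bsub>S\<^esub> incl F1 h) \<otimes>\<^bsub>S\<^esub> s"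
    using c step by (simp add: S.inv_mult_group S.m_assoc)
  also have "\<dots> = inv\<^bsub>S\<^esub> s \<otimes>\<^bsub>S\<^esub> incl ?F ?k \<otimes>\<^bsub>S\<^esub> s"
    using incl_conj step by simp
  also have "\<dots> = incl (conj_set G ?F (\<phi> s)) (inv\<^bsub>G\<^esub> (\<phi> s) \<otimes>\<^bsub>G\<^esub> ?k \<otimes>\<^bsub>G\<^esub> \<phi> s)"
    using step(4)[OF F k] .
  also have "\<dots> = incl (conj_set G F (\<phi> (incl F1 h \<otimes>\<^bsub>S\<^esub> s)))
      (inv\<^bsub>G\<^esub> (\<phi> (incl F1 h \<otimes>\<^bsub>S\<^esub> s)) \<otimes>\<^bsub>G\<^esub> f \<otimes>\<^bsub>G\<^esub> \<phi> (incl F1 h \<otimes>\<^bsub>S\<^esub> s))"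
    using conj_set_conj_set[OF subgroup.subset[OF subgroup_member[OF step(5)]] hG ps]
      active_sum_hom_incl step c hG fG ps by (simp add: G.inv_mult_group G.m_assoc)
  finally show ?case .
qed

lemma active_sum_hom_surj:
  assumes "generating G Fam"
  shows "\<phi> ` carrier S = carrier G"
proof
  show "\<phi> ` carrier S \<subseteq> carrier G" by auto
  have "\<Union>Fam \<subseteq> \<phi> ` carrier S"
  proof
    fix x
    assume "x \<in> \<Union>Fam"
    then obtain F where "F \<in> Fam" "x \<in> F" by blast
    then show "x \<in> \<phi> ` carrier S"
      using active_sum_hom_incl incl_closed by (metis image_eqI)
  qed
  then have "generate G (\<Union>Fam) \<subseteq> \<phi> ` carrier S"
    using G.generate_subgroup_incl \<phi>.img_is_subgroup by blast
  then show "carrier G \<subseteq> \<phi> ` carrier S" using assms by (simp add: generating_def)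
qed

lemma center_if_image_center:
  assumes s: "s \<in> carrier S" and s_center: "\<phi> s \<in> center G"
  shows "s \<in> center S"
proof -
  have ps: "\<phi> s \<in> carrier G" using s by simp
  have fixed: "inv\<^bsub>G\<^esub> (\<phi> s) \<otimes>\<^bsub>G\<^esub> x \<otimes>\<^bsub>G\<^esub> \<phi> s = x" if "x \<in> carrier G" for x
  proof -
    have "x \<otimes>\<^bsub>G\<^esub> \<phi> s = \<phi> s \<otimes>\<^bsub>G\<^esub> x" using s_center that unfolding center_def by auto
    then show ?thesis using that ps by (simp add: G.m_assoc G.cancel_simps)
  qed
  have incl_commutes: "s \<otimes>\<^bsub>S\<^esub> incl F f = incl F f \<otimes>\<^bsub>S\<^esub> s" if F: "F \<in> Fam" "f \<in> F" for F f
  proof -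
    have "conj_set G F (\<phi> s) = F"
      unfolding conj_set_def using fixed member_closed[OF F(1)] by simp
    then have "inv\<^bsub>S\<^esub> s \<otimes>\<^bsub>S\<^esub> incl F f \<otimes>\<^bsub>S\<^esub> s = incl F f"
      using incl_conj_active_sum[OF s F] fixed member_closed[OF F] by simp
    then show ?thesis
      using incl_closed[OF F] s by (metis S.inv_closed S.m_assoc S.m_closed S.cancel_simps(1))
  qed
  have "s \<otimes>\<^bsub>S\<^esub> y = y \<otimes>\<^bsub>S\<^esub> s" if "y \<in> carrier S" for y
    using that
  proof (induct rule: active_sum_induct)
    case (step F f y)
    then show ?case
      using incl_commutes[OF step(1,2)] incl_closed[OF step(1,2)] s by (metis S.m_assoc)
  qed (use s in simp)
  then show ?thesis using s unfolding center_def by blast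
qed

end

section \<open>Regular independent families: the abelianizations agree\<close>

lemma (in group) derived_coset_conj:
  assumes u: "u \<in> carrier G" and x: "x \<in> carrier G"
  shows "derived G (carrier G) #> (inv u \<otimes> x \<otimes> u) = derived G (carrier G) #> x"
proof -
  let ?D = "derived G (carrier G)" and ?c = "inv u \<otimes> x \<otimes> inv (inv u) \<otimes> inv x"
  have sD: "subgroup ?D G" using derived_is_subgroup by blast
  have c: "?c \<in> ?D" unfolding derived_def using u x by (blast intro: generate.incl)
  have "inv u \<otimes> x \<otimes> u = ?c \<otimes> x" using u x by (simp add: m_assoc)
  also have "?D #> (?c \<otimes> x) = ?D #> x"
    using coset_mult_assoc[OF subgroup.subset[OF sD], of ?c x] coset_join2[OF _ sD c] u x by simp
  finally show ?thesis .
qed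

lemma (in normal) coset_setmult_absorb:
  assumes "H' \<subseteq> H" and "\<one> \<in> H'" and a: "a \<in> carrier G"
  shows "(H' #> a) <#> H = H #> a"
proof
  show "(H' #> a) <#> H \<subseteq> H #> a"
  proof
    fix z
    assume "z \<in> (H' #> a) <#> H"
    then obtain h d where h: "h \<in> H'" and d: "d \<in> H" and z: "z = h \<otimes> a \<otimes> d"
      unfolding set_mult_def r_coset_def by auto
    have "h \<in> carrier G" "d \<in> carrier G" using h d assms subset by auto
    then have "z = (h \<otimes> (a \<otimes> d \<otimes> inv a)) \<otimes> a" using a z by (simp add: m_assoc)
    moreover have "h \<otimes> (a \<otimes> d \<otimes> inv a) \<in> H"
      using inv_op_closed2[OF a d] h assms by (simp add: m_closed subsetD)
    ultimately show "z \<in> H #> a" unfolding r_coset_def by blast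
  qed
next
  show "H #> a \<subseteq> (H' #> a) <#> H"
  proof
    fix z
    assume "z \<in> H #> a"
    then obtain d where d: "d \<in> H" and z: "z = d \<otimes> a" unfolding r_coset_def by auto
    have "z = (\<one> \<otimes> a) \<otimes> (inv a \<otimes> d \<otimes> a)"
      using d subset a z by (auto simp: m_assoc cancel_simps)
    moreover have "inv a \<otimes> d \<otimes> a \<in> H" using inv_op_closed1[OF a d] .
    moreover have "\<one> \<otimes> a \<in> H' #> a" using assms unfolding r_coset_def by blast
    ultimately show "z \<in> (H' #> a) <#> H" unfolding set_mult_def by blast
  qed
qed

lemma (in comm_group) finprod_mult_fun_upd:
  assumes "finite T" and "i \<in> T" and a: "a \<in> carrier G" and h: "h \<in> T \<rightarrow> carrier G"
  shows "a \<otimes> finprod G h T = finprod G (h(i := a \<otimes> h i)) T"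
proof -
  have "finprod G (h(i := a \<otimes> h i)) T = finprod G (\<lambda>E. (if E = i then a else \<one>) \<otimes> h E) T"
    using a h by (intro finprod_cong') (auto dest: funcset_mem)
  also have "\<dots> = finprod G (\<lambda>E. if E = i then a else \<one>) T \<otimes> finprod G h T"
    using a h by (intro finprod_multf) auto
  also have "finprod G (\<lambda>E. if E = i then a else \<one>) T = a"
    using finprod_singleton_swap[OF assms(2,1), of "\<lambda>_. a"] a by auto
  finally show ?thesis by (simp add: fun_upd_def)
qed

lemma (in comm_group) finprod_mult_coordinate:
  assumes "finite T" and i: "i \<in> T" and f: "f \<in> D i" and c: "c \<in> (\<Pi>\<^sub>E E\<in>T. D E)"
    and k_closed: "\<And>E x. E \<in> T \<Longrightarrow> x \<in> D E \<Longrightarrow> k E x \<in> carrier G"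
    and k_mult: "\<And>x y. x \<in> D i \<Longrightarrow> y \<in> D i \<Longrightarrow> k i (m x y) = k i x \<otimes> k i y"
  shows "k i f \<otimes> finprod G (\<lambda>E. k E (c E)) T = finprod G (\<lambda>E. k E ((c(i := m f (c i))) E)) T"
proof -
  have "(\<lambda>E. k E (c E))(i := k i f \<otimes> k i (c i)) = (\<lambda>E. k E ((c(i := m f (c i))) E))"
    using k_mult[OF f PiE_mem[OF c i]] by (auto simp: fun_eq_iff)
  then show ?thesis
    using finprod_mult_fun_upd[OF assms(1) i k_closed[OF i f], of "\<lambda>E. k E (c E)"] k_closed c by auto
qed

locale regular_independent_family = conj_closed_family +
  assumes generating: "generating G Fam" and regular: "regular_family G Fam"
    and finite: "finite (carrier G)" and independent: "independent_family G Fam"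
begin

abbreviation "DG \<equiv> derived G (carrier G)"
abbreviation "DS \<equiv> derived S (carrier S)"
abbreviation "QG \<equiv> G Mod DG"
abbreviation "QS \<equiv> S Mod DS"

sublocale QG: comm_group QG by (rule G.derived_quot_is_comm_group)
sublocale QS: comm_group QS by (rule S.derived_quot_is_comm_group)

lemma coset_hom_G: "(\<lambda>a. DG #>\<^bsub>G\<^esub> a) \<in> hom G QG"
  using normal.r_coset_hom_Mod[OF G.derived_self_is_normal] .

lemma coset_hom_S: "(\<lambda>a. DS #>\<^bsub>S\<^esub> a) \<in> hom S QS"
  using normal.r_coset_hom_Mod[OF S.derived_self_is_normal] .

lemma lift_exists: "g \<in> carrier G \<Longrightarrow> \<exists>u\<in>carrier S. \<phi> u = g"
  using active_sum_hom_surj[OF generating] by (metis imageE)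

lemma finite_family: "finite Fam"
  using finite subgroup_member subgroup.subset by (metis Pow_iff finite_Pow_iff finite_subset subsetI)

lemma conj_set_inv_normalizer:
  assumes F: "F \<in> Fam" and b: "b \<in> normalizer G F"
  shows "conj_set G F (inv\<^bsub>G\<^esub> b) = F"
proof -
  have b_closed: "b \<in> carrier G" using b by (simp add: normalizer_def stabilizer_def)
  then have "conj_set G F (inv\<^bsub>G\<^esub> b) = b <#\<^bsub>G\<^esub> F #>\<^bsub>G\<^esub> inv\<^bsub>G\<^esub> b"
    unfolding conj_set_def l_coset_def r_coset_def by auto
  also have "\<dots> = F"
    using b subgroup.subset[OF subgroup_member[OF F]] by (simp add: normalizer_def stabilizer_def)
  finally show ?thesis .
qed

text \<open>The generators \<open>[a, b]\<close> of \<open>[F, N\<^sub>G(F)]\<close> are already commutators in \<open>S\<close>, because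
  conjugation by \<open>b\<close> is realised in \<open>S\<close> by conjugation with a lift of \<open>b\<close>.\<close>

lemma incl_commutator_normalizer:
  assumes F: "F \<in> Fam" and a: "a \<in> F" and b: "b \<in> normalizer G F"
  shows "a \<otimes>\<^bsub>G\<^esub> b \<otimes>\<^bsub>G\<^esub> inv\<^bsub>G\<^esub> a \<otimes>\<^bsub>G\<^esub> inv\<^bsub>G\<^esub> b \<in> F"
    and "incl F (a \<otimes>\<^bsub>G\<^esub> b \<otimes>\<^bsub>G\<^esub> inv\<^bsub>G\<^esub> a \<otimes>\<^bsub>G\<^esub> inv\<^bsub>G\<^esub> b) \<in> DS"
proof -
  have b_closed: "b \<in> carrier G" using b by (simp add: normalizer_def stabilizer_def)
  have a_closed: "a \<in> carrier G" and ia: "inv\<^bsub>G\<^esub> a \<in> F"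
    using member_closed F a subgroup.m_inv_closed[OF subgroup_member[OF F] a] by blast+
  obtain u where u: "u \<in> carrier S" "\<phi> u = inv\<^bsub>G\<^esub> b" using lift_exists b_closed by blast
  let ?y = "b \<otimes>\<^bsub>G\<^esub> inv\<^bsub>G\<^esub> a \<otimes>\<^bsub>G\<^esub> inv\<^bsub>G\<^esub> b"
  have y: "?y \<in> F"
    using conj_set_memI[OF ia, of "inv\<^bsub>G\<^esub> b"] conj_set_inv_normalizer[OF F b] b_closed by simp
  have commutator_eq: "a \<otimes>\<^bsub>G\<^esub> b \<otimes>\<^bsub>G\<^esub> inv\<^bsub>G\<^esub> a \<otimes>\<^bsub>G\<^esub> inv\<^bsub>G\<^esub> b = a \<otimes>\<^bsub>G\<^esub> ?y"
    using a_closed b_closed by (simp add: G.m_assoc)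
  then show "a \<otimes>\<^bsub>G\<^esub> b \<otimes>\<^bsub>G\<^esub> inv\<^bsub>G\<^esub> a \<otimes>\<^bsub>G\<^esub> inv\<^bsub>G\<^esub> b \<in> F"
    using subgroup.m_closed[OF subgroup_member[OF F] a y] by simp
  have "incl F ?y = inv\<^bsub>S\<^esub> u \<otimes>\<^bsub>S\<^esub> inv\<^bsub>S\<^esub> (incl F a) \<otimes>\<^bsub>S\<^esub> u"
    using incl_conj_active_sum[OF u(1) F ia] u conj_set_inv_normalizer[OF F b] b_closed incl_inv[OF F a]
    by simp
  then have "incl F (a \<otimes>\<^bsub>G\<^esub> b \<otimes>\<^bsub>G\<^esub> inv\<^bsub>G\<^esub> a \<otimes>\<^bsub>G\<^esub> inv\<^bsub>G\<^esub> b)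
      = incl F a \<otimes>\<^bsub>S\<^esub> inv\<^bsub>S\<^esub> u \<otimes>\<^bsub>S\<^esub> inv\<^bsub>S\<^esub> (incl F a) \<otimes>\<^bsub>S\<^esub> inv\<^bsub>S\<^esub> (inv\<^bsub>S\<^esub> u)"
    using commutator_eq incl_mult[OF F a y] incl_closed[OF F a] u by (simp add: S.m_assoc)
  then show "incl F (a \<otimes>\<^bsub>G\<^esub> b \<otimes>\<^bsub>G\<^esub> inv\<^bsub>G\<^esub> a \<otimes>\<^bsub>G\<^esub> inv\<^bsub>G\<^esub> b) \<in> DS"
    unfolding derived_def using incl_closed[OF F a] u by (blast intro: generate.incl)
qed

lemma incl_derived:
  assumes F: "F \<in> Fam" and x: "x \<in> F \<inter> DG"
  shows "incl F x \<in> DS"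
proof -
  have sF: "subgroup F G" using subgroup_member F by blast
  have sDS: "subgroup DS S" using S.derived_is_subgroup by blast
  let ?H = "{x \<in> F. incl F x \<in> DS}"
  have sH: "subgroup ?H G"
  proof (rule G.subgroupI)
    show "?H \<subseteq> carrier G" using subgroup.subset[OF sF] by blast
    show "?H \<noteq> {}"
      using incl_one[OF F] subgroup.one_closed[OF sF] subgroup.one_closed[OF sDS] by auto
  next
    fix a
    assume "a \<in> ?H"
    then show "inv\<^bsub>G\<^esub> a \<in> ?H"
      using incl_inv[OF F] subgroup.m_inv_closed[OF sF] subgroup.m_inv_closed[OF sDS] by auto
  next
    fix a b
    assume "a \<in> ?H" "b \<in> ?H"
    then show "a \<otimes>\<^bsub>G\<^esub> b \<in> ?H"
      using incl_mult[OF F] subgroup.m_closed[OF sF] subgroup.m_closed[OF sDS] by auto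
  qed
  have "{a \<otimes>\<^bsub>G\<^esub> b \<otimes>\<^bsub>G\<^esub> inv\<^bsub>G\<^esub> a \<otimes>\<^bsub>G\<^esub> inv\<^bsub>G\<^esub> b | a b. a \<in> F \<and> b \<in> normalizer G F} \<subseteq> ?H"
    using incl_commutator_normalizer[OF F] by blast
  then have "commutator_subgroup G F (normalizer G F) \<subseteq> ?H"
    unfolding commutator_subgroup_def by (rule G.generate_subgroup_incl[OF _ sH])
  then show ?thesis using regular F x by (auto simp: regular_family_def)
qed

lemma incl_coset_representative:
  assumes T: "conj_reps G Fam T" and F': "F' \<in> Fam" and f': "f' \<in> F'"
  shows "\<exists>F\<in>T. \<exists>f\<in>F. DS #>\<^bsub>S\<^esub> incl F' f' = DS #>\<^bsub>S\<^esub> incl F f \<and> DG #>\<^bsub>G\<^esub> f' = DG #>\<^bsub>G\<^esub> f"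
proof -
  have "\<exists>!F\<in>T. \<exists>g\<in>carrier G. F' = conj_set G F g"
    using T F' by (simp add: conj_reps_def)
  then obtain F g where F: "F \<in> T" and g: "g \<in> carrier G" and F'_eq: "F' = conj_set G F g"
    by (metis ex1_implies_ex)
  have F_Fam: "F \<in> Fam" using T F unfolding conj_reps_def by blast
  obtain f where f: "f \<in> F" and f'_eq: "f' = inv\<^bsub>G\<^esub> g \<otimes>\<^bsub>G\<^esub> f \<otimes>\<^bsub>G\<^esub> g"
    using f' F'_eq unfolding conj_set_def by blast
  obtain u where u: "u \<in> carrier S" "\<phi> u = g" using lift_exists g by blast
  have "inv\<^bsub>S\<^esub> u \<otimes>\<^bsub>S\<^esub> incl F f \<otimes>\<^bsub>S\<^esub> u = incl F' f'"
    using incl_conj_active_sum[OF u(1) F_Fam f] u(2) F'_eq f'_eq by simp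
  then have "DS #>\<^bsub>S\<^esub> incl F' f' = DS #>\<^bsub>S\<^esub> incl F f"
    using S.derived_coset_conj[OF u(1) incl_closed[OF F_Fam f]] by simp
  moreover have "DG #>\<^bsub>G\<^esub> f' = DG #>\<^bsub>G\<^esub> f"
    using G.derived_coset_conj[OF g member_closed[OF F_Fam f]] f'_eq by simp
  ultimately show ?thesis using F f by blast
qed

lemma coset_product_decomposition:
  assumes T: "conj_reps G Fam T" and s: "s \<in> carrier S"
  shows "\<exists>c\<in>(\<Pi>\<^sub>E F\<in>T. F). DS #>\<^bsub>S\<^esub> s = finprod QS (\<lambda>F. DS #>\<^bsub>S\<^esub> incl F (c F)) T
           \<and> DG #>\<^bsub>G\<^esub> \<phi> s = finprod QG (\<lambda>F. DG #>\<^bsub>G\<^esub> c F) T"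
  using s
proof (induct rule: active_sum_induct)
  have T_Fam: "T \<subseteq> Fam" using T by (simp add: conj_reps_def)
  case one
  have ones: "DS #>\<^bsub>S\<^esub> \<one>\<^bsub>S\<^esub> = \<one>\<^bsub>QS\<^esub>" "DG #>\<^bsub>G\<^esub> \<one>\<^bsub>G\<^esub> = \<one>\<^bsub>QG\<^esub>"
    using S.coset_mult_one[OF subgroup.subset[OF S.derived_is_subgroup]]
      G.coset_mult_one[OF subgroup.subset[OF G.derived_is_subgroup]]
    by (simp_all add: FactGroup_def)
  let ?c = "\<lambda>F\<in>T. \<one>\<^bsub>G\<^esub>"
  have "?c \<in> (\<Pi>\<^sub>E F\<in>T. F)"
    using T_Fam subgroup_member subgroup.one_closed by fastforce
  moreover have "finprod QS (\<lambda>F. DS #>\<^bsub>S\<^esub> incl F (?c F)) T = \<one>\<^bsub>QS\<^esub>"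
    by (rule QS.finprod_one_eqI) (use T_Fam incl_one ones in auto)
  moreover have "finprod QG (\<lambda>F. DG #>\<^bsub>G\<^esub> ?c F) T = \<one>\<^bsub>QG\<^esub>"
    by (rule QG.finprod_one_eqI) (use ones in auto)
  ultimately show ?case using ones by (intro bexI[of _ ?c]) auto
next
  case (step F' f' s)
  have T_Fam: "T \<subseteq> Fam" using T by (simp add: conj_reps_def)
  have finite_T: "finite T" using T_Fam finite_family finite_subset by blast
  obtain c where c: "c \<in> (\<Pi>\<^sub>E F\<in>T. F)"
    and cS: "DS #>\<^bsub>S\<^esub> s = finprod QS (\<lambda>F. DS #>\<^bsub>S\<^esub> incl F (c F)) T"
    and cG: "DG #>\<^bsub>G\<^esub> \<phi> s = finprod QG (\<lambda>F. DG #>\<^bsub>G\<^esub> c F) T"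
    using step(4) by blast
  obtain F f where F: "F \<in> T" and f: "f \<in> F"
    and rS: "DS #>\<^bsub>S\<^esub> incl F' f' = DS #>\<^bsub>S\<^esub> incl F f" and rG: "DG #>\<^bsub>G\<^esub> f' = DG #>\<^bsub>G\<^esub> f"
    using incl_coset_representative[OF T step(1,2)] by blast
  have F_Fam: "F \<in> Fam" using F T_Fam by blast
  let ?c = "c(F := f \<otimes>\<^bsub>G\<^esub> c F)"
  have "f \<otimes>\<^bsub>G\<^esub> c F \<in> F" using subgroup.m_closed[OF subgroup_member[OF F_Fam] f PiE_mem[OF c F]] .
  then have c': "?c \<in> (\<Pi>\<^sub>E F\<in>T. F)" using PiE_fun_upd[OF _ c] F by (metis insert_absorb)
  have "DS #>\<^bsub>S\<^esub> (incl F' f' \<otimes>\<^bsub>S\<^esub> s) = (DS #>\<^bsub>S\<^esub> incl F f) \<otimes>\<^bsub>QS\<^esub> finprod QS (\<lambda>F. DS #>\<^bsub>S\<^esub> incl F (c F)) T"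
    using hom_mult[OF coset_hom_S incl_closed[OF step(1,2)] step(3)] rS cS by simp
  also have "\<dots> = finprod QS (\<lambda>E. DS #>\<^bsub>S\<^esub> incl E (?c E)) T"
  proof (rule QS.finprod_mult_coordinate[OF finite_T F f c])
    show "DS #>\<^bsub>S\<^esub> incl E x \<in> carrier QS" if "E \<in> T" "x \<in> E" for E x
      using that T_Fam incl_closed hom_in_carrier[OF coset_hom_S] by blast
    show "DS #>\<^bsub>S\<^esub> incl F (x \<otimes>\<^bsub>G\<^esub> y) = (DS #>\<^bsub>S\<^esub> incl F x) \<otimes>\<^bsub>QS\<^esub> (DS #>\<^bsub>S\<^esub> incl F y)"
      if "x \<in> F" "y \<in> F" for x y
      using that F_Fam incl_closed incl_mult hom_mult[OF coset_hom_S] by simp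
  qed
  finally have S_eq: "DS #>\<^bsub>S\<^esub> (incl F' f' \<otimes>\<^bsub>S\<^esub> s) = finprod QS (\<lambda>E. DS #>\<^bsub>S\<^esub> incl E (?c E)) T" .
  have "DG #>\<^bsub>G\<^esub> \<phi> (incl F' f' \<otimes>\<^bsub>S\<^esub> s) = (DG #>\<^bsub>G\<^esub> f) \<otimes>\<^bsub>QG\<^esub> finprod QG (\<lambda>F. DG #>\<^bsub>G\<^esub> c F) T"
    using hom_mult[OF coset_hom_G member_closed[OF step(1,2)] \<phi>.hom_closed[OF step(3)]] rG cG
      active_sum_hom_incl[OF step(1,2)] incl_closed[OF step(1,2)] step(3) by simp
  also have "\<dots> = finprod QG (\<lambda>E. DG #>\<^bsub>G\<^esub> ?c E) T"
  proof (rule QG.finprod_mult_coordinate[OF finite_T F f c])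
    show "DG #>\<^bsub>G\<^esub> x \<in> carrier QG" if "E \<in> T" "x \<in> E" for E x
      using that T_Fam member_closed hom_in_carrier[OF coset_hom_G] by blast
    show "DG #>\<^bsub>G\<^esub> (x \<otimes>\<^bsub>G\<^esub> y) = (DG #>\<^bsub>G\<^esub> x) \<otimes>\<^bsub>QG\<^esub> (DG #>\<^bsub>G\<^esub> y)"
      if "x \<in> F" "y \<in> F" for x y
      using that F_Fam member_closed hom_mult[OF coset_hom_G] by simp
  qed
  finally show ?case using c' S_eq by blast
qed

lemma cosets_in_product_group:
  assumes "d \<in> (\<Pi>\<^sub>E F\<in>T. F)"
  shows "(\<lambda>F\<in>T. (F \<inter> DG) #>\<^bsub>G\<^esub> d F)
    \<in> carrier (product_group T (\<lambda>F. G\<lparr>carrier := F\<rparr> Mod (F \<inter> DG)))"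
  using assms by (auto simp: FactGroup_def RCOSETS_def r_coset_def)

lemma indep_map_cosets:
  assumes T_Fam: "T \<subseteq> Fam" and d: "d \<in> (\<Pi>\<^sub>E F\<in>T. F)"
  shows "indep_map G T (\<lambda>F\<in>T. (F \<inter> DG) #>\<^bsub>G\<^esub> d F) = finprod QG (\<lambda>F. DG #>\<^bsub>G\<^esub> d F) T"
  unfolding indep_map_def
proof (rule QG.finprod_cong')
  have d_closed: "d F \<in> carrier G" if "F \<in> T" for F
    using that d T_Fam member_closed by blast
  then show "(\<lambda>F. DG #>\<^bsub>G\<^esub> d F) \<in> T \<rightarrow> carrier QG"
    using hom_in_carrier[OF coset_hom_G] by blast
  show "(\<lambda>F\<in>T. (F \<inter> DG) #>\<^bsub>G\<^esub> d F) F <#>\<^bsub>G\<^esub> DG = DG #>\<^bsub>G\<^esub> d F" if "F \<in> T" for F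
    using normal.coset_setmult_absorb[OF G.derived_self_is_normal, of "F \<inter> DG" "d F"]
      that d_closed[OF that] T_Fam subgroup.one_closed[OF subgroup_member]
      subgroup.one_closed[OF G.derived_is_subgroup[OF subset_refl]]
    by auto
qed simp

text \<open>Independence forces the coordinates of an element of \<open>\<phi>\<^sup>-\<^sup>1(G')\<close> into \<open>F \<inter> G'\<close>,
  and regularity then puts it into \<open>S'\<close>.\<close>

lemma derived_if_image_derived:
  assumes s: "s \<in> carrier S" and s_derived: "\<phi> s \<in> DG"
  shows "s \<in> DS"
proof -
  obtain T where T: "conj_reps G Fam T"
    and iso: "indep_map G T \<in> iso (product_group T (\<lambda>F. G\<lparr>carrier := F\<rparr> Mod (F \<inter> DG))) QG"
    using independent unfolding independent_family_def by blast
  have T_Fam: "T \<subseteq> Fam" using T by (simp add: conj_reps_def)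
  obtain c where c: "c \<in> (\<Pi>\<^sub>E F\<in>T. F)"
    and cS: "DS #>\<^bsub>S\<^esub> s = finprod QS (\<lambda>F. DS #>\<^bsub>S\<^esub> incl F (c F)) T"
    and cG: "DG #>\<^bsub>G\<^esub> \<phi> s = finprod QG (\<lambda>F. DG #>\<^bsub>G\<^esub> c F) T"
    using coset_product_decomposition[OF T s] by blast
  have sub_DG: "subgroup DG G" using G.derived_is_subgroup by blast
  let ?one = "\<lambda>F\<in>T. \<one>\<^bsub>G\<^esub>"
  have one: "?one \<in> (\<Pi>\<^sub>E F\<in>T. F)" using T_Fam subgroup_member subgroup.one_closed by fastforce
  have "indep_map G T (\<lambda>F\<in>T. (F \<inter> DG) #>\<^bsub>G\<^esub> c F) = \<one>\<^bsub>QG\<^esub>"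
    using indep_map_cosets[OF T_Fam c] cG G.coset_join2[OF \<phi>.hom_closed[OF s] sub_DG s_derived]
    by (simp add: FactGroup_def)
  moreover have "finprod QG (\<lambda>F. DG #>\<^bsub>G\<^esub> ?one F) T = \<one>\<^bsub>QG\<^esub>"
    by (rule QG.finprod_one_eqI)
      (use G.coset_mult_one[OF subgroup.subset[OF sub_DG]] in \<open>simp add: FactGroup_def\<close>)
  then have "indep_map G T (\<lambda>F\<in>T. (F \<inter> DG) #>\<^bsub>G\<^esub> ?one F) = \<one>\<^bsub>QG\<^esub>"
    using indep_map_cosets[OF T_Fam one] by simp
  ultimately have cosets_eq: "(\<lambda>F\<in>T. (F \<inter> DG) #>\<^bsub>G\<^esub> c F) = (\<lambda>F\<in>T. (F \<inter> DG) #>\<^bsub>G\<^esub> ?one F)"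
    using iso cosets_in_product_group[OF c] cosets_in_product_group[OF one]
    unfolding iso_def bij_betw_def by (metis (no_types, lifting) inj_onD mem_Collect_eq)
  have c_derived: "c F \<in> F \<inter> DG" if "F \<in> T" for F
  proof -
    have "F \<inter> DG \<subseteq> carrier G" using subgroup.subset[OF sub_DG] by blast
    then have "(F \<inter> DG) #>\<^bsub>G\<^esub> c F = F \<inter> DG"
      using fun_cong[OF cosets_eq, of F] that G.coset_mult_one by simp
    moreover have "c F \<in> (F \<inter> DG) #>\<^bsub>G\<^esub> c F"
      using that T_Fam c member_closed subgroup.one_closed[OF subgroup_member] subgroup.one_closed[OF sub_DG]
      unfolding r_coset_def by (metis (no_types, lifting) G.l_one IntI PiE_mem UN_I singletonI subsetD)
    ultimately show ?thesis by simp
  qed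
  have "finprod QS (\<lambda>F. DS #>\<^bsub>S\<^esub> incl F (c F)) T = \<one>\<^bsub>QS\<^esub>"
  proof (rule QS.finprod_one_eqI)
    fix F
    assume F: "F \<in> T"
    then have "incl F (c F) \<in> DS" using incl_derived c_derived T_Fam by blast
    moreover have "incl F (c F) \<in> carrier S" using incl_closed F T_Fam c by blast
    ultimately show "DS #>\<^bsub>S\<^esub> incl F (c F) = \<one>\<^bsub>QS\<^esub>"
      using S.coset_join2[OF _ S.derived_is_subgroup[OF subset_refl]] by (simp add: FactGroup_def)
  qed
  then have "DS #>\<^bsub>S\<^esub> s = DS" using cS by (simp add: FactGroup_def)
  then show ?thesis using S.rcos_self[OF s S.derived_is_subgroup[OF subset_refl]] by simp
qed

end

section \<open>Central extensions of metacyclic groups\<close>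

lemma (in group) commutator_eq_one_iff:
  "x \<in> carrier G \<Longrightarrow> y \<in> carrier G \<Longrightarrow> x \<otimes> y \<otimes> inv x \<otimes> inv y = \<one> \<longleftrightarrow> x \<otimes> y = y \<otimes> x"
  by (simp add: inv_solve_right')

lemma (in group) inv_commute:
  "x \<in> carrier G \<Longrightarrow> y \<in> carrier G \<Longrightarrow> x \<otimes> y = y \<otimes> x \<Longrightarrow> inv x \<otimes> y = y \<otimes> inv x"
  by (metis inv_closed m_assoc m_closed r_inv r_one l_inv l_one)

lemma (in group) m_left_commute:
  "x \<in> carrier G \<Longrightarrow> y \<in> carrier G \<Longrightarrow> z \<in> carrier G \<Longrightarrow> x \<otimes> y = y \<otimes> x \<Longrightarrow> x \<otimes> (y \<otimes> z) = y \<otimes> (x \<otimes> z)"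
  by (simp add: m_assoc[symmetric])

lemma (in group) commutator_mult_left:
  assumes c: "m1 \<in> carrier G" "m2 \<in> carrier G" "t \<in> carrier G"
    and h1: "(t \<otimes> inv m1 \<otimes> inv t) \<otimes> m2 = m2 \<otimes> (t \<otimes> inv m1 \<otimes> inv t)"
    and h2: "(t \<otimes> inv m1 \<otimes> inv t) \<otimes> (t \<otimes> inv m2 \<otimes> inv t) = (t \<otimes> inv m2 \<otimes> inv t) \<otimes> (t \<otimes> inv m1 \<otimes> inv t)"
  shows "(m1 \<otimes> t \<otimes> inv m1 \<otimes> inv t) \<otimes> (m2 \<otimes> t \<otimes> inv m2 \<otimes> inv t)
       = (m1 \<otimes> m2) \<otimes> t \<otimes> inv (m1 \<otimes> m2) \<otimes> inv t"
proof -
  let ?A = "t \<otimes> inv m1 \<otimes> inv t" and ?B = "t \<otimes> inv m2 \<otimes> inv t"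
  have "(m1 \<otimes> t \<otimes> inv m1 \<otimes> inv t) \<otimes> (m2 \<otimes> t \<otimes> inv m2 \<otimes> inv t) = m1 \<otimes> (?A \<otimes> (m2 \<otimes> ?B))"
    using c by (simp add: m_assoc)
  also have "\<dots> = m1 \<otimes> (m2 \<otimes> (?A \<otimes> ?B))" using h1 c by (simp add: m_assoc[symmetric])
  also have "\<dots> = m1 \<otimes> (m2 \<otimes> (?B \<otimes> ?A))" using h2 by simp
  also have "\<dots> = (m1 \<otimes> m2) \<otimes> t \<otimes> inv (m1 \<otimes> m2) \<otimes> inv t"
    using c by (simp add: m_assoc inv_mult_group cancel_simps)
  finally show ?thesis .
qed

lemma (in group) commutator_inv_left:
  assumes c: "m \<in> carrier G" "t \<in> carrier G"
    and h: "(t \<otimes> m \<otimes> inv t) \<otimes> inv m = inv m \<otimes> (t \<otimes> m \<otimes> inv t)"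
  shows "inv (m \<otimes> t \<otimes> inv m \<otimes> inv t) = inv m \<otimes> t \<otimes> inv (inv m) \<otimes> inv t"
proof -
  have "inv (m \<otimes> t \<otimes> inv m \<otimes> inv t) = (t \<otimes> m \<otimes> inv t) \<otimes> inv m"
    using c by (simp add: m_assoc inv_mult_group)
  also have "\<dots> = inv m \<otimes> t \<otimes> inv (inv m) \<otimes> inv t" using h c by (simp add: m_assoc)
  finally show ?thesis .
qed

lemma (in group) commutator_pow_Suc:
  assumes c: "m \<in> carrier G" "t \<in> carrier G"
  shows "m \<otimes> t [^] (Suc j) \<otimes> inv m \<otimes> inv (t [^] (Suc j))
     = (m \<otimes> t [^] j \<otimes> inv m \<otimes> inv (t [^] j)) \<otimes>
       ((t [^] j \<otimes> m \<otimes> inv (t [^] j)) \<otimes> t \<otimes> inv (t [^] j \<otimes> m \<otimes> inv (t [^] j)) \<otimes> inv t)"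
proof -
  have "t [^] (Suc j) = t \<otimes> t [^] j" using nat_pow_Suc2 c by blast
  then show ?thesis using c by (simp add: m_assoc inv_mult_group cancel_simps)
qed

lemma (in group) commutator_decompose:
  assumes c: "m1 \<in> carrier G" "m2 \<in> carrier G" "t \<in> carrier G"
    and h: "(t [^] j \<otimes> inv m1 \<otimes> inv (t [^] j)) \<otimes> (t [^] i \<otimes> m2 \<otimes> inv (t [^] i))
          = (t [^] i \<otimes> m2 \<otimes> inv (t [^] i)) \<otimes> (t [^] j \<otimes> inv m1 \<otimes> inv (t [^] j))"
  shows "(m1 \<otimes> t [^] (i::nat)) \<otimes> (m2 \<otimes> t [^] (j::nat)) \<otimes> inv (m1 \<otimes> t [^] i) \<otimes> inv (m2 \<otimes> t [^] j)
     = (m1 \<otimes> t [^] j \<otimes> inv m1 \<otimes> inv (t [^] j)) \<otimes> inv (m2 \<otimes> t [^] i \<otimes> inv m2 \<otimes> inv (t [^] i))"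
proof -
  let ?X = "t [^] j \<otimes> inv m1 \<otimes> inv (t [^] j)" and ?Y = "t [^] i \<otimes> m2 \<otimes> inv (t [^] i)"
  have ti: "t [^] i \<in> carrier G" and tj: "t [^] j \<in> carrier G" using c by auto
  have "inv (t [^] i) \<otimes> t [^] j = t [^] j \<otimes> inv (t [^] i)"
    using inv_commute[OF ti tj nat_pow_comm[OF c(3)]] .
  then have swap: "t [^] j \<otimes> (inv (t [^] i) \<otimes> z) = inv (t [^] i) \<otimes> (t [^] j \<otimes> z)" if "z \<in> carrier G" for z
    using that ti tj by (intro m_left_commute) auto
  have "(m1 \<otimes> t [^] i) \<otimes> (m2 \<otimes> t [^] j) \<otimes> inv (m1 \<otimes> t [^] i) \<otimes> inv (m2 \<otimes> t [^] j)
      = m1 \<otimes> (?Y \<otimes> (?X \<otimes> inv m2))"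
    using c ti tj by (simp add: m_assoc inv_mult_group cancel_simps swap)
  also have "\<dots> = m1 \<otimes> (?X \<otimes> (?Y \<otimes> inv m2))"
    using m_left_commute[OF _ _ inv_closed[OF c(2)] h[symmetric]] c ti tj by simp
  also have "\<dots> = (m1 \<otimes> t [^] j \<otimes> inv m1 \<otimes> inv (t [^] j)) \<otimes> inv (m2 \<otimes> t [^] i \<otimes> inv m2 \<otimes> inv (t [^] i))"
    using c ti tj by (simp add: m_assoc inv_mult_group cancel_simps)
  finally show ?thesis .
qed

text \<open>If \<open>M\<close> is an abelian normal subgroup, \<open>m \<mapsto> [m, t]\<close> is a homomorphism on \<open>M\<close>,
  so its image is a subgroup.\<close>

lemma (in group) commutators_with_subgroup:
  assumes M: "M \<lhd> G" and M_comm: "\<And>a b. a \<in> M \<Longrightarrow> b \<in> M \<Longrightarrow> a \<otimes> b = b \<otimes> a" and t: "t \<in> carrier G"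
  shows "subgroup ((\<lambda>m. m \<otimes> t \<otimes> inv m \<otimes> inv t) ` M) G"
proof -
  interpret M: normal M G by (rule M)
  have conj: "t \<otimes> m \<otimes> inv t \<in> M" if "m \<in> M" for m
    using M.inv_op_closed2[OF t that] .
  show ?thesis
  proof (rule subgroupI)
    show "(\<lambda>m. m \<otimes> t \<otimes> inv m \<otimes> inv t) ` M \<subseteq> carrier G" using t M.subset by auto
    show "(\<lambda>m. m \<otimes> t \<otimes> inv m \<otimes> inv t) ` M \<noteq> {}" using M.one_closed by blast
  next
    fix a
    assume "a \<in> (\<lambda>m. m \<otimes> t \<otimes> inv m \<otimes> inv t) ` M"
    then obtain m where m: "m \<in> M" and a: "a = m \<otimes> t \<otimes> inv m \<otimes> inv t" by blast
    have "inv a = inv m \<otimes> t \<otimes> inv (inv m) \<otimes> inv t"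
      unfolding a using commutator_inv_left[OF M.subset[THEN subsetD, OF m] t M_comm[OF conj[OF m] M.m_inv_closed[OF m]]] .
    then show "inv a \<in> (\<lambda>m. m \<otimes> t \<otimes> inv m \<otimes> inv t) ` M" using M.m_inv_closed[OF m] by blast
  next
    fix a b
    assume "a \<in> (\<lambda>m. m \<otimes> t \<otimes> inv m \<otimes> inv t) ` M" "b \<in> (\<lambda>m. m \<otimes> t \<otimes> inv m \<otimes> inv t) ` M"
    then obtain m1 m2 where m: "m1 \<in> M" "m2 \<in> M"
      and ab: "a = m1 \<otimes> t \<otimes> inv m1 \<otimes> inv t" "b = m2 \<otimes> t \<otimes> inv m2 \<otimes> inv t" by blast
    have "a \<otimes> b = (m1 \<otimes> m2) \<otimes> t \<otimes> inv (m1 \<otimes> m2) \<otimes> inv t"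
      unfolding ab using commutator_mult_left[OF M.subset[THEN subsetD, OF m(1)] M.subset[THEN subsetD, OF m(2)] t
          M_comm[OF conj[OF M.m_inv_closed[OF m(1)]] m(2)]
          M_comm[OF conj[OF M.m_inv_closed[OF m(1)]] conj[OF M.m_inv_closed[OF m(2)]]]] .
    then show "a \<otimes> b \<in> (\<lambda>m. m \<otimes> t \<otimes> inv m \<otimes> inv t) ` M" using M.m_closed[OF m] by blast
  qed
qed

lemma (in group) derived_subset_commutators_with:
  assumes M: "M \<lhd> G" and M_comm: "\<And>a b. a \<in> M \<Longrightarrow> b \<in> M \<Longrightarrow> a \<otimes> b = b \<otimes> a" and t: "t \<in> carrier G"
    and decompose: "\<And>a. a \<in> carrier G \<Longrightarrow> \<exists>m\<in>M. \<exists>k::nat. a = m \<otimes> t [^] k"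
  shows "derived G (carrier G) \<subseteq> (\<lambda>m. m \<otimes> t \<otimes> inv m \<otimes> inv t) ` M"
proof -
  interpret M: normal M G by (rule M)
  let ?C = "(\<lambda>m. m \<otimes> t \<otimes> inv m \<otimes> inv t) ` M"
  have C: "subgroup ?C G" using commutators_with_subgroup[OF M M_comm t] .
  have pow: "m \<otimes> t [^] j \<otimes> inv m \<otimes> inv (t [^] j) \<in> ?C" if m: "m \<in> M" for m and j :: nat
  proof (induct j)
    case 0
    show ?case using m M.subset subgroup.one_closed[OF C] by auto
  next
    case (Suc j)
    have "t [^] j \<otimes> m \<otimes> inv (t [^] j) \<in> M" using M.inv_op_closed2[OF _ m] t by simp
    then have "(t [^] j \<otimes> m \<otimes> inv (t [^] j)) \<otimes> t \<otimes> inv (t [^] j \<otimes> m \<otimes> inv (t [^] j)) \<otimes> inv t \<in> ?C"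
      by (rule imageI)
    then show ?case
      using commutator_pow_Suc[OF M.subset[THEN subsetD, OF m] t, of j] subgroup.m_closed[OF C Suc] by simp
  qed
  have "derived_set G (carrier G) \<subseteq> ?C"
  proof clarify
    fix a b
    assume a: "a \<in> carrier G" and b: "b \<in> carrier G"
    obtain m1 i where m1: "m1 \<in> M" and a_eq: "a = m1 \<otimes> t [^] (i::nat)" using decompose[OF a] by blast
    obtain m2 j where m2: "m2 \<in> M" and b_eq: "b = m2 \<otimes> t [^] (j::nat)" using decompose[OF b] by blast
    have X: "t [^] j \<otimes> inv m1 \<otimes> inv (t [^] j) \<in> M" and Y: "t [^] i \<otimes> m2 \<otimes> inv (t [^] i) \<in> M"
      using M.inv_op_closed2 M.m_inv_closed m1 m2 t by simp_all
    have "a \<otimes> b \<otimes> inv a \<otimes> inv b = (m1 \<otimes> t [^] j \<otimes> inv m1 \<otimes> inv (t [^] j))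
        \<otimes> inv (m2 \<otimes> t [^] i \<otimes> inv m2 \<otimes> inv (t [^] i))"
      unfolding a_eq b_eq
      by (rule commutator_decompose[OF M.subset[THEN subsetD, OF m1] M.subset[THEN subsetD, OF m2] t
            M_comm[OF X Y]])
    then show "a \<otimes> b \<otimes> inv a \<otimes> inv b \<in> ?C"
      using pow[OF m1] pow[OF m2] subgroup.m_closed[OF C] subgroup.m_inv_closed[OF C] by simp
  qed
  then show ?thesis unfolding derived_def by (rule generate_subgroup_incl[OF _ C])
qed

lemma (in group) cyclic_group_nat_pow:
  assumes "finite (carrier G)" and "cyclic_group G"
  obtains x where "x \<in> carrier G" and "\<And>y. y \<in> carrier G \<Longrightarrow> \<exists>k::nat. y = x [^] k"
proof -
  obtain x where x: "x \<in> carrier G" and "subgroup_generated G {x} = G"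
    using assms(2) unfolding cyclic_group_def by blast
  then have "carrier G = carrier (subgroup_generated G {x})" by simp
  also have "\<dots> = generate G {x}" using x by (simp add: carrier_subgroup_generated Int_absorb1)
  also have "\<dots> = {x [^] k | k. k \<in> (UNIV :: nat set)}"
    using generate_pow_on_finite_carrier[OF assms(1) x] .
  finally show ?thesis using that x by blast
qed

lemma (in group) metacyclic_decomposition:
  assumes fin: "finite (carrier G)" and "metacyclic G"
  obtains N n g where "N \<lhd> G" and "n \<in> N" and "\<And>y. y \<in> N \<Longrightarrow> \<exists>a::nat. y = n [^] a"
    and "g \<in> carrier G" and "\<And>x. x \<in> carrier G \<Longrightarrow> \<exists>y\<in>N. \<exists>k::nat. x = y \<otimes> g [^] k"
proof -
  obtain N where N: "N \<lhd> G" and N_cyclic: "cyclic_group (G\<lparr>carrier := N\<rparr>)"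
    and Q_cyclic: "cyclic_group (G Mod N)"
    using assms(2) unfolding metacyclic_def by blast
  interpret N: normal N G by (rule N)
  have "finite (carrier (G\<lparr>carrier := N\<rparr>))" using finite_subset[OF N.subset fin] by simp
  then obtain n where n: "n \<in> N"
    and "\<And>y. y \<in> N \<Longrightarrow> \<exists>a::nat. y = n [^]\<^bsub>G\<lparr>carrier := N\<rparr>\<^esub> a"
    by (rule group.cyclic_group_nat_pow[OF subgroup_imp_group[OF N.subgroup_axioms] _ N_cyclic]) auto
  then have n_gen: "\<And>y. y \<in> N \<Longrightarrow> \<exists>a::nat. y = n [^] a"
    by (simp add: nat_pow_consistent[symmetric])
  have "finite (carrier (G Mod N))"
    using fin by (simp add: FactGroup_def RCOSETS_def)
  then obtain gN where gN: "gN \<in> carrier (G Mod N)"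
    and gN_gen: "\<And>Y. Y \<in> carrier (G Mod N) \<Longrightarrow> \<exists>k::nat. Y = gN [^]\<^bsub>G Mod N\<^esub> k"
    by (rule group.cyclic_group_nat_pow[OF N.factorgroup_is_group _ Q_cyclic]) blast
  obtain g where g: "g \<in> carrier G" and gN_eq: "gN = N #> g"
    using gN unfolding FactGroup_def RCOSETS_def by auto
  have "\<exists>y\<in>N. \<exists>k::nat. x = y \<otimes> g [^] k" if x: "x \<in> carrier G" for x
  proof -
    obtain k :: nat where "N #> x = gN [^]\<^bsub>G Mod N\<^esub> k"
      using gN_gen hom_in_carrier[OF N.r_coset_hom_Mod x] by blast
    also have "\<dots> = N #> (g [^] k)"
      using hom_nat_pow[OF N.r_coset_hom_Mod g is_group N.factorgroup_is_group] gN_eq by simp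
    finally have "x \<in> N #> (g [^] k)" using rcos_self[OF x N.subgroup_axioms] by simp
    then show ?thesis unfolding r_coset_def by blast
  qed
  then show ?thesis using that N n n_gen g by blast
qed

lemma (in group) center_if_commutes_with_generators:
  assumes decompose: "\<And>x. x \<in> carrier G \<Longrightarrow> \<exists>y\<in>N. \<exists>k::nat. x = y \<otimes> g [^] k"
    and "N \<subseteq> carrier G" and g: "g \<in> carrier G" and z: "z \<in> carrier G"
    and commutes_N: "\<And>y. y \<in> N \<Longrightarrow> z \<otimes> y = y \<otimes> z" and commutes_g: "z \<otimes> g = g \<otimes> z"
  shows "z \<in> center G"
proof -
  have "z \<otimes> x = x \<otimes> z" if x: "x \<in> carrier G" for x
  proof -
    obtain y k where y: "y \<in> N" and x_eq: "x = y \<otimes> g [^] (k::nat)" using decompose[OF x] by blast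
    have y_closed: "y \<in> carrier G" using y assms(2) by blast
    have "z \<otimes> x = (z \<otimes> y) \<otimes> g [^] k" using x_eq y_closed g z by (simp add: m_assoc)
    also have "\<dots> = y \<otimes> (z \<otimes> g [^] k)" using commutes_N[OF y] y_closed g z by (simp add: m_assoc)
    also have "\<dots> = x \<otimes> z"
      using group_commutes_pow[OF commutes_g[symmetric] g z, of k] x_eq y_closed g z by (simp add: m_assoc)
    finally show ?thesis .
  qed
  then show ?thesis using z unfolding center_def by blast
qed

lemma (in group_hom) commute_if_images_powers:
  assumes kernel: "kernel G H h \<subseteq> center G" and u: "u \<in> carrier G"
    and x: "x \<in> carrier G" "h x = h u [^]\<^bsub>H\<^esub> (a::nat)"
    and y: "y \<in> carrier G" "h y = h u [^]\<^bsub>H\<^esub> (b::nat)"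
  shows "x \<otimes> y = y \<otimes> x"
proof -
  have central: "k \<otimes> z = z \<otimes> k" if "k \<in> carrier G" "h k = \<one>\<^bsub>H\<^esub>" "z \<in> carrier G" for k z
    using kernel that unfolding kernel_def center_def by blast
  define k1 where "k1 = inv (u [^] a) \<otimes> x"
  define k2 where "k2 = inv (u [^] b) \<otimes> y"
  have k: "k1 \<in> carrier G" "h k1 = \<one>\<^bsub>H\<^esub>" "k2 \<in> carrier G" "h k2 = \<one>\<^bsub>H\<^esub>"
    using u x y hom_nat_pow by (simp_all add: k1_def k2_def)
  have x_eq: "x = u [^] a \<otimes> k1" and y_eq: "y = u [^] b \<otimes> k2"
    using u x y by (simp_all add: k1_def k2_def G.cancel_simps)
  have pa: "u [^] a \<in> carrier G" and pb: "u [^] b \<in> carrier G" using u by auto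
  have "x \<otimes> y = u [^] a \<otimes> (k1 \<otimes> u [^] b) \<otimes> k2" using x_eq y_eq k pa pb by (simp add: G.m_assoc)
  also have "\<dots> = (u [^] a \<otimes> u [^] b) \<otimes> (k1 \<otimes> k2)" using central[OF k(1,2) pb] k pa pb by (simp add: G.m_assoc)
  also have "\<dots> = (u [^] b \<otimes> u [^] a) \<otimes> (k2 \<otimes> k1)" using central[OF k(1,2) k(3)] G.nat_pow_comm u by simp
  also have "\<dots> = u [^] b \<otimes> (k2 \<otimes> u [^] a) \<otimes> k1" using central[OF k(3,4) pa] k pa pb by (simp add: G.m_assoc)
  also have "\<dots> = y \<otimes> x" using x_eq y_eq k pa pb by (simp add: G.m_assoc)
  finally show ?thesis .
qed

lemma (in group_hom) derived_subset_commutators_with_lift: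
  assumes surj: "h ` carrier G = carrier H" and kernel_center: "kernel G H h \<subseteq> center G"
    and N: "N \<lhd> H" and n: "n \<in> N" and n_gen: "\<And>y. y \<in> N \<Longrightarrow> \<exists>a::nat. y = n [^]\<^bsub>H\<^esub> a"
    and decompose_H: "\<And>x. x \<in> carrier H \<Longrightarrow> \<exists>y\<in>N. \<exists>k::nat. x = y \<otimes>\<^bsub>H\<^esub> g [^]\<^bsub>H\<^esub> k"
    and t: "t \<in> carrier G" "h t = g"
  shows "derived G (carrier G) \<subseteq> (\<lambda>m. m \<otimes> t \<otimes> inv m \<otimes> inv t) ` {m \<in> carrier G. h m \<in> N}"
proof -
  interpret N: normal N H by (rule N)
  define M where "M = {m \<in> carrier G. h m \<in> N}"
  obtain u where u: "u \<in> carrier G" "h u = n" using surj n N.subset by (metis imageE subsetD)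
  have M_normal: "M \<lhd> G"
    unfolding G.normal_inv_iff
  proof (intro conjI ballI)
    show "subgroup M G"
      by (rule G.subgroupI) (auto simp: M_def N.m_inv_closed N.m_closed)
    show "x \<otimes> m \<otimes> inv x \<in> M" if "x \<in> carrier G" "m \<in> M" for x m
      using that N.inv_op_closed2 by (simp add: M_def)
  qed
  have M_comm: "a \<otimes> b = b \<otimes> a" if ab: "a \<in> M" "b \<in> M" for a b
  proof -
    obtain i :: nat where i: "h a = n [^]\<^bsub>H\<^esub> i" using n_gen[of "h a"] ab by (auto simp: M_def)
    obtain j :: nat where j: "h b = n [^]\<^bsub>H\<^esub> j" using n_gen[of "h b"] ab by (auto simp: M_def)
    show ?thesis
      by (rule commute_if_images_powers[OF kernel_center u(1)]) (use i j u(2) ab in \<open>auto simp: M_def\<close>)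
  qed
  have decompose: "\<exists>m\<in>M. \<exists>k::nat. a = m \<otimes> t [^] k" if a: "a \<in> carrier G" for a
  proof -
    obtain y k where y: "y \<in> N" and ha: "h a = y \<otimes>\<^bsub>H\<^esub> g [^]\<^bsub>H\<^esub> (k::nat)"
      using decompose_H[of "h a"] a by auto
    have "h (a \<otimes> inv (t [^] k)) = h a \<otimes>\<^bsub>H\<^esub> inv\<^bsub>H\<^esub> (g [^]\<^bsub>H\<^esub> k)"
      using a t by (simp add: hom_nat_pow)
    also have "\<dots> = y" using ha subsetD[OF N.subset y] t hom_closed[OF t(1)] by (simp add: H.m_assoc)
    finally have "a \<otimes> inv (t [^] k) \<in> M" using a t y by (simp add: M_def)
    moreover have "a = (a \<otimes> inv (t [^] k)) \<otimes> t [^] k" using a t by (simp add: G.m_assoc)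
    ultimately show ?thesis by blast
  qed
  show ?thesis
    using G.derived_subset_commutators_with[OF M_normal M_comm t(1) decompose] by (simp add: M_def)
qed

text \<open>For \<open>H = N\<langle>g\<rangle>\<close>, a commutator \<open>[m, t]\<close> in the kernel has \<open>h m\<close> commuting with \<open>g\<close> and
  (as \<open>N\<close> is cyclic) with \<open>N\<close>, so \<open>h m\<close> and hence \<open>m\<close> is central and \<open>[m, t] = 1\<close>.\<close>

lemma (in group_hom) metacyclic_inj_on:
  assumes surj: "h ` carrier G = carrier H" and fin: "finite (carrier H)" and meta: "metacyclic H"
    and reflects_center: "\<And>s. s \<in> carrier G \<Longrightarrow> h s \<in> center H \<Longrightarrow> s \<in> center G"
    and kernel_derived: "kernel G H h \<subseteq> derived G (carrier G)"
  shows "inj_on h (carrier G)"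
proof (rule trivial_ker_imp_inj)
  obtain N n g where N: "N \<lhd> H" and n: "n \<in> N" and n_gen: "\<And>y. y \<in> N \<Longrightarrow> \<exists>a::nat. y = n [^]\<^bsub>H\<^esub> a"
    and g: "g \<in> carrier H" and decompose_H: "\<And>x. x \<in> carrier H \<Longrightarrow> \<exists>y\<in>N. \<exists>k::nat. x = y \<otimes>\<^bsub>H\<^esub> g [^]\<^bsub>H\<^esub> k"
    by (rule H.metacyclic_decomposition[OF fin meta]) blast
  have N_closed: "N \<subseteq> carrier H" using N normal_imp_subgroup subgroup.subset by blast
  have kernel_center: "kernel G H h \<subseteq> center G"
    using reflects_center by (force simp: kernel_def center_def)
  obtain t where t: "t \<in> carrier G" "h t = g" using surj g by (metis imageE)
  have "kernel G H h \<subseteq> {\<one>}"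
  proof
    fix s
    assume s: "s \<in> kernel G H h"
    then obtain m where m_closed: "m \<in> carrier G" and hm: "h m \<in> N"
      and s_eq: "s = m \<otimes> t \<otimes> inv m \<otimes> inv t"
      using kernel_derived derived_subset_commutators_with_lift[OF surj kernel_center N n n_gen decompose_H t]
      by blast
    have "h m \<otimes>\<^bsub>H\<^esub> g \<otimes>\<^bsub>H\<^esub> inv\<^bsub>H\<^esub> h m \<otimes>\<^bsub>H\<^esub> inv\<^bsub>H\<^esub> g = \<one>\<^bsub>H\<^esub>"
      using s s_eq m_closed t by (simp add: kernel_def)
    then have "h m \<otimes>\<^bsub>H\<^esub> g = g \<otimes>\<^bsub>H\<^esub> h m" using H.commutator_eq_one_iff m_closed g by simp
    moreover have "h m \<otimes>\<^bsub>H\<^esub> y = y \<otimes>\<^bsub>H\<^esub> h m" if "y \<in> N" for y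
      using n_gen[OF hm] n_gen[OF that] H.nat_pow_comm n N_closed by (metis subsetD)
    ultimately have "h m \<in> center H"
      using H.center_if_commutes_with_generators[OF decompose_H N_closed g] m_closed by simp
    then have "m \<otimes> t = t \<otimes> m" using reflects_center m_closed t unfolding center_def by blast
    then show "s \<in> {\<one>}" using G.commutator_eq_one_iff[OF m_closed t(1)] s_eq by blast
  qed
  then show "kernel G H h = {\<one>}" by (auto simp: kernel_def)
qed

theorem corollary3p2:
  fixes G :: "('a, 'b) monoid_scheme" and \<F> :: "'a set set"
  assumes "group G" and "finite (carrier G)" and "metacyclic G"
    and "family G \<F>" and "generating G \<F>" and "conj_closed G \<F>"
    and "regular_family G \<F>" and "independent_family G \<F>"
  shows "active_sum_hom G \<F> \<in> iso (active_sum G \<F>) G"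
proof -
  interpret regular_independent_family G \<F>
    by (intro regular_independent_family.intro conj_closed_family.intro
        regular_independent_family_axioms.intro) (use assms in auto)
  have "inj_on \<phi> (carrier S)"
  proof (rule \<phi>.metacyclic_inj_on)
    show "\<phi> ` carrier S = carrier G" by (rule active_sum_hom_surj[OF generating])
    show "kernel S G \<phi> \<subseteq> DS"
      using derived_if_image_derived G.derived_is_subgroup[OF subset_refl, THEN subgroup.one_closed]
      by (auto simp: kernel_def)
  qed (use assms center_if_image_center in auto)
  then show ?thesis
    using active_sum_hom_hom active_sum_hom_surj[OF generating] unfolding iso_def bij_betw_def by blast
qed

end
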